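(* Let $m,p,n$ be positive integers with $p\mid m$ and $n>1$, and let $\boldsymbol\theta=(\theta_1,\dots,\theta_n)$ be the basic polynomial map of $G(m,p,n)$ described in the context. Consider the map $\pi:\mathbb C^n\to\mathbb C^{n-1}$, $\pi(z_1,\ldots,z_n)=(\gamma_1z_1,\ldots,\gamma_{n-1}z_{n-1})$ with $\gamma_i=\frac{n-i}{n}$, $i=1,\ldots,n-1$. Then $\pi(\overline{\boldsymbol\Theta}_n)\subseteq\Gamma_{n-1}$.
   Context: Put $q=m/p$. $G(m,p,n)$ is the group of $n\times n$ monomial matrices whose nonzero entries are $m$-th roots of unity and whose product of nonzero entries is an $(m/p)$-th root of unity. Let $s_i$ denote the $i$-th elementary symmetric polynomial. For $1\le i\le n-1$, $\theta_i(z)=s_i(z_1^m,\ldots,z_n^m)$, and $\theta_n(z)=(z_1\cdots z_n)^q$. Put $\boldsymbol\Theta_n=\boldsymbol\theta(\mathbb D^n)$, so that $\overline{\boldsymbol\Theta}_n=\boldsymbol\theta(\overline{\mathbb D}^n)$. For $k\ge1$, $\Gamma_k=\boldsymbol s(\overline{\mathbb D}^k)$ is the closed symmetrized polydisc, where $\boldsymbol s=(s_1,\dots,s_k)$ on $\mathbb C^k$. *)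

theory Defs
  imports "HOL-Analysis.Analysis"
begin

text \<open>Points of C^k are represented as complex lists of length k.
  Coordinate z_j (1-based) is z ! (j-1).\<close>

definition esym :: "nat \<Rightarrow> complex list \<Rightarrow> complex" where
  "esym i z = (\<Sum>S\<in>{S. S \<subseteq> {0..<length z} \<and> card S = i}. \<Prod>j\<in>S. z ! j)"

definition closed_polydisc :: "nat \<Rightarrow> complex list set" where
  "closed_polydisc k = {z. length z = k \<and> (\<forall>x\<in>set z. norm x \<le> 1)}"

definition symmap :: "nat \<Rightarrow> complex list \<Rightarrow> complex list" where
  "symmap k z = map (\<lambda>i. esym i z) [1..<k+1]"

definition Gamma_sym :: "nat \<Rightarrow> complex list set" where
  "Gamma_sym k = symmap k ` closed_polydisc k"

definition theta :: "nat \<Rightarrow> nat \<Rightarrow> nat \<Rightarrow> complex list \<Rightarrow> complex list" where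
  "theta m p n z = map (\<lambda>i. if i < n then esym i (map (\<lambda>x. x ^ m) z)
                              else (prod_list z) ^ (m div p)) [1..<n+1]"

text \<open>Closure of Theta_n, i.e. theta of the closed polydisc.\<close>
definition Theta_closed :: "nat \<Rightarrow> nat \<Rightarrow> nat \<Rightarrow> complex list set" where
  "Theta_closed m p n = theta m p n ` closed_polydisc n"

definition proj_pi :: "nat \<Rightarrow> complex list \<Rightarrow> complex list" where
  "proj_pi n z = map (\<lambda>i. complex_of_real ((real n - real i) / real n) * z ! (i - 1)) [1..<n]"

end

theory Submission
  imports Defs "HOL-Computational_Algebra.Fundamental_Theorem_Algebra"
begin

text \<open>For z in the closed polydisc put w_j = z_j^m and F(X) = \<Prod>_j (X + w_j), whose
  coefficient of X^(n-i) is s_i(w). Factor F'/n = \<Prod>_k (X + u_k) with k < n - 1. Since the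
  roots of F lie in the closed unit disc, so do those of F' (a Gauss--Lucas argument), hence u
  lies in the closed polydisc; and comparing coefficients of F' and F gives
  s_i(u) = (n-i)/n s_i(w) for 0 < i < n, i.e. pi(theta(z)) = s(u).\<close>

definition elem_sym :: "nat \<Rightarrow> 'a set \<Rightarrow> ('a \<Rightarrow> 'b::comm_semiring_1) \<Rightarrow> 'b" where
  "elem_sym i A f = (\<Sum>S\<in>{S. S \<subseteq> A \<and> card S = i}. \<Prod>j\<in>S. f j)"

lemma esym_eq_elem_sym: "esym i z = elem_sym i {..<length z} ((!) z)"
  by (simp add: esym_def elem_sym_def atLeast0LessThan)

lemma elem_sym_cong:
  "(\<And>j. j \<in> A \<Longrightarrow> f j = g j) \<Longrightarrow> elem_sym i A f = elem_sym i A g"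
  unfolding elem_sym_def by (intro sum.cong refl prod.cong) auto

lemma coeff_prod_linear:
  fixes f :: "'a \<Rightarrow> 'b::comm_semiring_1"
  assumes "finite A"
  shows "coeff (\<Prod>j\<in>A. [:f j, 1:]) k =
    (if k \<le> card A then elem_sym (card A - k) A f else 0)"
proof -
  have "(\<Prod>j\<in>A. [:f j, 1:]) = (\<Prod>j\<in>A. [:f j:] + monom 1 1)"
    by (intro prod.cong refl) (simp add: monom_altdef)
  also have "\<dots> = (\<Sum>S\<in>Pow A. monom (\<Prod>j\<in>S. f j) (card (A - S)))"
    using assms by (simp add: prod_add prod_to_poly monom_power smult_monom)
  finally have "coeff (\<Prod>j\<in>A. [:f j, 1:]) k =
      (\<Sum>S\<in>Pow A. if card (A - S) = k then \<Prod>j\<in>S. f j else 0)"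
    by (simp add: coeff_sum)
  also have "\<dots> = (\<Sum>S\<in>{S \<in> Pow A. card (A - S) = k}. \<Prod>j\<in>S. f j)"
    by (rule sum.inter_filter[symmetric]) (use assms in simp)
  also have "{S \<in> Pow A. card (A - S) = k} =
      (if k \<le> card A then {S. S \<subseteq> A \<and> card S = card A - k} else {})"
    using assms by (auto simp: card_Diff_subset finite_subset card_mono)
  finally show ?thesis by (simp add: elem_sym_def)
qed

lemma lead_coeff_pderiv:
  fixes p :: "'a::{comm_semiring_1,semiring_no_zero_divisors,semiring_char_0} poly"
  shows "lead_coeff (pderiv p) = of_nat (degree p) * lead_coeff p"
proof (cases "degree p")
  case 0
  then show ?thesis by (simp add: coeff_pderiv coeff_eq_0)
next
  case (Suc d)
  then show ?thesis by (simp add: degree_pderiv coeff_pderiv)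
qed

lemma pderiv_prod_linear_decompose:
  fixes w :: "nat \<Rightarrow> complex"
  obtains u where "smult (of_nat n) (\<Prod>k<n - 1. [:u k, 1:]) = pderiv (\<Prod>j<n. [:w j, 1:])"
proof -
  define F where "F = (\<Prod>j<n. [:w j, 1:])"
  have lead: "lead_coeff F = 1"
    unfolding F_def lead_coeff_prod by simp
  have deg: "degree F = n"
    by (simp add: F_def degree_prod_sum_eq)
  obtain root where
    "smult (lead_coeff (pderiv F)) (\<Prod>k<degree (pderiv F). [:- root k, 1:]) = pderiv F"
    by (rule complex_poly_decompose')
  moreover have "degree (pderiv F) = n - 1"
    using deg by (simp add: degree_pderiv)
  moreover have "coeff (pderiv F) (n - 1) = of_nat n"
    using lead_coeff_pderiv[of F] deg lead by (simp add: degree_pderiv)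
  ultimately have "smult (of_nat n) (\<Prod>k<n - 1. [:- root k, 1:]) = pderiv F"
    by (simp only:)
  then show ?thesis
    unfolding F_def by (rule that)
qed

lemma elem_sym_pderiv_roots:
  fixes u w :: "nat \<Rightarrow> 'a::{comm_semiring_1,semiring_no_zero_divisors}"
  assumes deriv: "smult (of_nat n) (\<Prod>k<n - 1. [:u k, 1:]) = pderiv (\<Prod>j<n. [:w j, 1:])"
    and "i < n"
  shows "of_nat n * elem_sym i {..<n - 1} u = of_nat (n - i) * elem_sym i {..<n} w"
proof -
  have "of_nat n * elem_sym i {..<n - 1} u
      = coeff (smult (of_nat n) (\<Prod>k<n - 1. [:u k, 1:])) (n - 1 - i)"
    using \<open>i < n\<close> by (simp add: coeff_prod_linear)
  also have "\<dots> = of_nat (n - i) * coeff (\<Prod>j<n. [:w j, 1:]) (n - i)"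
    unfolding deriv using \<open>i < n\<close> by (simp add: coeff_pderiv Suc_diff_Suc)
  also have "\<dots> = of_nat (n - i) * elem_sym i {..<n} w"
    using \<open>i < n\<close> by (simp add: coeff_prod_linear)
  finally show ?thesis .
qed

lemma Re_divide_add_pos:
  fixes t w :: complex
  assumes "norm w \<le> r" "r < norm t"
  shows "0 < Re (t / (t + w))"
proof -
  define v where "v = w / t"
  have "t \<noteq> 0"
    using assms norm_ge_zero[of w] by (metis norm_zero order.trans not_less)
  then have eq: "t / (t + w) = 1 / (1 + v)" by (simp add: v_def field_simps)
  have "norm v < 1"
    using assms \<open>t \<noteq> 0\<close> by (simp add: v_def norm_divide divide_less_eq)
  with abs_Re_le_cmod[of v] have "0 < Re (1 + v)" by simp
  then have "1 + v \<noteq> 0"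
    by (metis less_irrefl zero_complex.sel(1))
  with \<open>0 < Re (1 + v)\<close> show ?thesis unfolding eq Re_divide' by simp
qed

text \<open>Gauss--Lucas for a disc: at a point t outside the disc every term t / (t + w j) of
  t F'(t) / F(t) has positive real part, so F' cannot vanish there.\<close>
lemma pderiv_prod_linear_root_norm_le:
  fixes w :: "'a \<Rightarrow> complex"
  assumes fin: "finite A" and "A \<noteq> {}"
    and w: "\<And>j. j \<in> A \<Longrightarrow> norm (w j) \<le> r"
    and root: "poly (pderiv (\<Prod>j\<in>A. [:w j, 1:])) t = 0"
  shows "norm t \<le> r"
proof (rule ccontr)
  assume "\<not> norm t \<le> r"
  then have t: "r < norm t" by simp
  have nz: "t + w j \<noteq> 0" if "j \<in> A" for j
  proof
    assume "t + w j = 0"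
    then have "norm t = norm (w j)"
      by (metis add_eq_0_iff norm_minus_cancel)
    with w[OF that] t show False by simp
  qed
  have "poly (pderiv (\<Prod>j\<in>A. [:w j, 1:])) t =
      (\<Sum>a\<in>A. \<Prod>j\<in>A - {a}. t + w j)"
    by (simp add: pderiv_prod poly_sum poly_prod pderiv_pCons add.commute)
  also have "\<dots> = (\<Sum>a\<in>A. (\<Prod>j\<in>A. t + w j) / (t + w a))"
    using fin nz by (intro sum.cong refl) (simp add: prod_diff1)
  also have "\<dots> = (\<Prod>j\<in>A. t + w j) * (\<Sum>a\<in>A. 1 / (t + w a))"
    by (simp add: sum_distrib_left)
  finally have "(\<Sum>a\<in>A. 1 / (t + w a)) = 0"
    using root fin nz by simp
  moreover have "(\<Sum>a\<in>A. Re (t / (t + w a))) = Re (t * (\<Sum>a\<in>A. 1 / (t + w a)))"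
    by (simp add: Re_sum sum_distrib_left)
  moreover have "(\<Sum>a\<in>A. Re (t / (t + w a))) > 0"
    using Re_divide_add_pos[OF w t] fin \<open>A \<noteq> {}\<close> by (intro sum_pos) auto
  ultimately show False by simp
qed

lemma pderiv_roots_in_closed_polydisc:
  assumes w: "w \<in> closed_polydisc n" and "0 < n"
  obtains u where "u \<in> closed_polydisc (n - 1)"
    and "\<And>i. i < n \<Longrightarrow> esym i u = of_nat (n - i) / of_nat n * esym i w"
proof -
  have len: "length w = n" and w_le: "\<And>j. j < n \<Longrightarrow> norm (w ! j) \<le> 1"
    using w by (auto simp: closed_polydisc_def)
  obtain v where
    deriv: "smult (of_nat n) (\<Prod>k<n - 1. [:v k, 1:]) = pderiv (\<Prod>j<n. [:w ! j, 1:])"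
    by (rule pderiv_prod_linear_decompose)
  have "norm (v k) \<le> 1" if "k < n - 1" for k
  proof -
    have "poly (\<Prod>k<n - 1. [:v k, 1:]) (- v k) = 0"
      using that by (auto simp: poly_prod)
    then have "poly (pderiv (\<Prod>j<n. [:w ! j, 1:])) (- v k) = 0"
      by (simp flip: deriv)
    then show ?thesis
      using pderiv_prod_linear_root_norm_le[of "{..<n}" "(!) w" 1 "- v k"] w_le \<open>0 < n\<close>
      by (simp add: lessThan_empty_iff)
  qed
  then have "map v [0..<n - 1] \<in> closed_polydisc (n - 1)"
    by (auto simp: closed_polydisc_def)
  moreover have "esym i (map v [0..<n - 1]) = of_nat (n - i) / of_nat n * esym i w" if "i < n" for i
  proof -
    have "esym i (map v [0..<n - 1]) = elem_sym i {..<n - 1} v"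
      by (simp add: esym_eq_elem_sym) (rule elem_sym_cong, simp)
    with elem_sym_pderiv_roots[OF deriv that] \<open>0 < n\<close> show ?thesis
      by (simp add: esym_eq_elem_sym len field_simps)
  qed
  ultimately show ?thesis by (rule that)
qed

lemma proj_pi_theta:
  "proj_pi n (theta m p n z) =
     map (\<lambda>i. complex_of_real ((real n - real i) / real n) * esym i (map (\<lambda>x. x ^ m) z))
       [1..<n]"
  by (auto simp: proj_pi_def theta_def nth_append)

text \<open>The coordinate theta_n, the only one involving p, is discarded by pi.\<close>
theorem lemma2p6:
  fixes m p n :: nat
  assumes "0 < m" and "0 < p" and "p dvd m" and "1 < n"
  shows "proj_pi n ` Theta_closed m p n \<subseteq> Gamma_sym (n - 1)"
proof
  fix y assume "y \<in> proj_pi n ` Theta_closed m p n"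
  then obtain z where z: "z \<in> closed_polydisc n" and y: "y = proj_pi n (theta m p n z)"
    by (auto simp: Theta_closed_def)
  define w where "w = map (\<lambda>x. x ^ m) z"
  have "w \<in> closed_polydisc n"
    using z by (auto simp: w_def closed_polydisc_def norm_power power_le_one)
  then obtain u where u: "u \<in> closed_polydisc (n - 1)"
    and esym_u: "\<And>i. i < n \<Longrightarrow> esym i u = of_nat (n - i) / of_nat n * esym i w"
    using pderiv_roots_in_closed_polydisc \<open>1 < n\<close> by (metis zero_less_one order.strict_trans)
  have "y = symmap (n - 1) u"
    using \<open>1 < n\<close> by (auto simp: y proj_pi_theta symmap_def esym_u w_def of_nat_diff)
  with u show "y \<in> Gamma_sym (n - 1)"
    by (simp add: Gamma_sym_def)
qed

end
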